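(* For any offline algorithm $\mathrm{Algo}(\cdot)$ (mapping datasets to policies), there exist an MDP instance $\mathcal{M}$ and an offline dataset $\mathcal{D}$ such that $\mathcal{D}$ can be generated by $\mathcal{M}$ (under some behavior policy), the optimal-policy concentrability condition fails (there is no optimal policy $\pi^*$ of $\mathcal{M}$ with $d^{\pi^*}_h(s,a)>0\implies d^\mu_h(s,a)>0$ for all $(h,s,a)$, where $\mu$ is the behavior policy), and $\mathrm{Algo}(\mathcal{D})$ incurs a sub-optimality bounded below by a positive absolute constant almost surely over the randomness of $\mathcal{D}$.
   Context: Episodic MDP with horizon $H$, initial distribution $d_1$; $d^\pi_h(s,a)$ state-action visitation density at step $h$ under $\pi$. Sub-optimality of a policy $\pi$: $\mathbb{E}_{s\sim d_1}[V^*_1(s)-V^\pi_1(s)]$, where $V^\pi_1$ is the value of $\pi$ and $V^*_1$ the optimal value. *)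

theory Defs
  imports "HOL-Probability.Probability"
begin

text \<open>States and actions are natural numbers; the state space is a
finite nonempty set, and the action space is (up to relabelling) a finite nonempty set:
every action outside it behaves exactly like some action inside it.
Steps are indexed 0..H-1 (paper: 1..H).\<close>

record mdp =
  states  :: "nat set"
  actions :: "nat set"
  horizon :: nat
  init    :: "nat pmf"
  trans   :: "nat \<Rightarrow> nat \<Rightarrow> nat \<Rightarrow> nat pmf"   (* step, state, action *)
  rew     :: "nat \<Rightarrow> nat \<Rightarrow> nat \<Rightarrow> real"       (* step, state, action *)

definition wf_mdp :: "mdp \<Rightarrow> bool" where
  "wf_mdp M \<longleftrightarrow>
     finite (states M) \<and> states M \<noteq> {} \<and> finite (actions M) \<and> actions M \<noteq> {} \<and>
     horizon M \<ge> 1 \<and>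
     set_pmf (init M) \<subseteq> states M \<and>
     (\<forall>h s a. set_pmf (trans M h s a) \<subseteq> states M) \<and>
     (\<forall>h s a. 0 \<le> rew M h s a \<and> rew M h s a \<le> 1) \<and>
     (\<forall>h s a. \<exists>a'\<in>actions M. rew M h s a = rew M h s a' \<and> trans M h s a = trans M h s a')"

text \<open>A (Markov, possibly stochastic, non-stationary) policy: step, state \<mapsto> action distribution.\<close>
type_synonym policy = "nat \<Rightarrow> nat \<Rightarrow> nat pmf"

fun val :: "mdp \<Rightarrow> policy \<Rightarrow> nat \<Rightarrow> nat \<Rightarrow> nat \<Rightarrow> real" where
  "val M pol h 0 s = 0"
| "val M pol h (Suc k) s =
     measure_pmf.expectation (pol h s)
       (\<lambda>a. rew M h s a + measure_pmf.expectation (trans M h s a) (\<lambda>s'. val M pol (Suc h) k s'))"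

definition V :: "mdp \<Rightarrow> policy \<Rightarrow> nat \<Rightarrow> nat \<Rightarrow> real" where
  "V M pol h s = val M pol h (horizon M - h) s"

definition Vstar :: "mdp \<Rightarrow> nat \<Rightarrow> nat \<Rightarrow> real" where
  "Vstar M h s = (SUP pol. V M pol h s)"

definition optimal_policy :: "mdp \<Rightarrow> policy \<Rightarrow> bool" where
  "optimal_policy M pol \<longleftrightarrow> (\<forall>h < horizon M. \<forall>s \<in> states M. V M pol h s = Vstar M h s)"

definition subopt :: "mdp \<Rightarrow> policy \<Rightarrow> real" where
  "subopt M pol = measure_pmf.expectation (init M) (\<lambda>s. Vstar M 0 s - V M pol 0 s)"

fun state_dist :: "mdp \<Rightarrow> policy \<Rightarrow> nat \<Rightarrow> nat pmf" where
  "state_dist M pol 0 = init M"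
| "state_dist M pol (Suc h) =
     bind_pmf (state_dist M pol h) (\<lambda>s. bind_pmf (pol h s) (\<lambda>a. trans M h s a))"

definition occ :: "mdp \<Rightarrow> policy \<Rightarrow> nat \<Rightarrow> nat \<Rightarrow> nat \<Rightarrow> real" where
  "occ M pol h s a = pmf (bind_pmf (state_dist M pol h) (\<lambda>s'. map_pmf (\<lambda>a'. (s', a')) (pol h s'))) (s, a)"

definition opt_concentrable :: "mdp \<Rightarrow> policy \<Rightarrow> bool" where
  "opt_concentrable M mu \<longleftrightarrow>
     (\<exists>pol. optimal_policy M pol \<and>
        (\<forall>h < horizon M. \<forall>s a. occ M pol h s a > 0 \<longrightarrow> occ M mu h s a > 0))"

type_synonym trajectory = "(nat \<times> nat \<times> real) list"
type_synonym dataset = "trajectory list"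

fun traj_from :: "mdp \<Rightarrow> policy \<Rightarrow> nat \<Rightarrow> nat \<Rightarrow> nat \<Rightarrow> trajectory pmf" where
  "traj_from M mu h 0 s = return_pmf []"
| "traj_from M mu h (Suc k) s =
     bind_pmf (mu h s) (\<lambda>a. bind_pmf (trans M h s a) (\<lambda>s'.
       map_pmf (\<lambda>rest. (s, a, rew M h s a) # rest) (traj_from M mu (Suc h) k s')))"

definition traj_dist :: "mdp \<Rightarrow> policy \<Rightarrow> trajectory pmf" where
  "traj_dist M mu = bind_pmf (init M) (traj_from M mu 0 (horizon M))"

fun iid_pmf :: "nat \<Rightarrow> 'b pmf \<Rightarrow> 'b list pmf" where
  "iid_pmf 0 p = return_pmf []"
| "iid_pmf (Suc k) p = bind_pmf p (\<lambda>x. map_pmf (\<lambda>xs. x # xs) (iid_pmf k p))"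

definition dataset_dist :: "mdp \<Rightarrow> policy \<Rightarrow> nat \<Rightarrow> dataset pmf" where
  "dataset_dist M mu K = iid_pmf K (traj_dist M mu)"

end

theory Submission
  imports Defs
begin

text \<open>Consider two one-step bandits on a single state whose sets of rewarding arms, \<open>{1}\<close> and
\<open>{2, 3, \<dots>}\<close>, are disjoint, and a behaviour policy that always pulls arm 0, which is
unrewarding in both. The dataset is then deterministic and the same for both bandits, so the
algorithm outputs the same policy; this policy puts mass at most 1/2 on one of the two disjoint
sets of rewarding arms and is therefore 1/2-suboptimal in the corresponding bandit.
Concentrability fails because every optimal policy pulls a rewarding arm, never seen in the data.\<close>

definition bandit :: "nat set \<Rightarrow> mdp" where
  "bandit A = \<lparr>states = {0}, actions = {0, 1, 2}, horizon = 1, init = return_pmf 0,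
     trans = (\<lambda>h s a. return_pmf 0), rew = (\<lambda>h s a. indicator A a)\<rparr>"

definition pull_zero :: policy where
  "pull_zero = (\<lambda>h s. return_pmf 0)"

lemma wf_mdp_bandit:
  assumes "0 \<notin> A" and "A \<inter> {1, 2} \<noteq> {}"
  shows "wf_mdp (bandit A)"
proof -
  obtain b where b: "b \<in> A" "b \<in> {1, 2}"
    using assms(2) by blast
  have "\<exists>a'\<in>{0, 1, 2}. indicator A a = (indicator A a' :: real)" for a
    using b assms(1) by (cases "a \<in> A") (auto simp: indicator_def)
  then show ?thesis
    unfolding wf_mdp_def bandit_def by (auto simp: indicator_def)
qed

lemma V_bandit: "V (bandit A) pol 0 s = measure_pmf.prob (pol 0 s) A"
  by (simp add: V_def bandit_def)

lemma Vstar_bandit: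
  assumes "b \<in> A"
  shows "Vstar (bandit A) 0 s = 1"
  unfolding Vstar_def
proof (rule cSup_eq_maximum)
  show "1 \<in> range (\<lambda>pol. V (bandit A) pol 0 s)"
    using assms by (intro image_eqI[where x = "\<lambda>h s. return_pmf b"]) (simp_all add: V_bandit)
qed (auto simp: V_bandit)

lemma subopt_bandit:
  assumes "b \<in> A"
  shows "subopt (bandit A) pol = 1 - measure_pmf.prob (pol 0 0) A"
  using Vstar_bandit[OF assms] by (simp add: subopt_def V_bandit) (simp add: bandit_def)

lemma occ_step_zero:
  assumes "init M = return_pmf s"
  shows "occ M pol 0 s a = pmf (pol 0 s) a"
  using assms unfolding occ_def by (simp add: bind_return_pmf pmf_map_inj' inj_on_def)

lemma dataset_dist_bandit_pull_zero:
  assumes "0 \<notin> A"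
  shows "dataset_dist (bandit A) pull_zero 1 = return_pmf [[(0, 0, 0)]]"
  using assms
  by (simp add: dataset_dist_def traj_dist_def bandit_def pull_zero_def bind_return_pmf map_pmf_def)

lemma not_opt_concentrable_bandit_pull_zero:
  assumes "0 \<notin> A" and "b \<in> A"
  shows "\<not> opt_concentrable (bandit A) pull_zero"
proof
  assume "opt_concentrable (bandit A) pull_zero"
  then obtain pol where opt: "optimal_policy (bandit A) pol"
    and covered: "\<forall>h < horizon (bandit A). \<forall>s a. occ (bandit A) pol h s a > 0 \<longrightarrow>
                    occ (bandit A) pull_zero h s a > 0"
    unfolding opt_concentrable_def by blast
  have "V (bandit A) pol 0 0 = Vstar (bandit A) 0 0"
    using opt unfolding optimal_policy_def by (simp add: bandit_def)
  then have "measure_pmf.prob (pol 0 0) A \<noteq> 0"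
    using Vstar_bandit[OF assms(2)] by (simp add: V_bandit)
  then obtain a where a: "a \<in> set_pmf (pol 0 0)" "a \<in> A"
    by (metis measure_pmf_zero_iff disjoint_iff)
  then have "occ (bandit A) pol 0 0 a > 0"
    by (simp add: occ_step_zero bandit_def pmf_positive)
  with covered have "occ (bandit A) pull_zero 0 0 a > 0"
    by (simp add: bandit_def)
  then show False
    using a assms(1) by (auto simp: occ_step_zero bandit_def pull_zero_def indicator_def)
qed

lemma bandit_pull_zero_lower_bound:
  assumes "0 \<notin> A" and "A \<inter> {1, 2} \<noteq> {}"
    and "measure_pmf.prob (Algo [[(0, 0, 0)]] 0 0) A \<le> 1/2"
  shows "\<exists>M mu K. wf_mdp M \<and> K \<ge> 1 \<and> \<not> opt_concentrable M mu \<and>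
           (AE D in measure_pmf (dataset_dist M mu K). subopt M (Algo D) \<ge> 1/2)"
proof (intro exI conjI)
  obtain b where "b \<in> A"
    using assms(2) by blast
  show "wf_mdp (bandit A)"
    using assms(1,2) by (rule wf_mdp_bandit)
  show "\<not> opt_concentrable (bandit A) pull_zero"
    using assms(1) \<open>b \<in> A\<close> by (rule not_opt_concentrable_bandit_pull_zero)
  show "AE D in measure_pmf (dataset_dist (bandit A) pull_zero 1). subopt (bandit A) (Algo D) \<ge> 1/2"
    using assms(3) subopt_bandit[OF \<open>b \<in> A\<close>] dataset_dist_bandit_pull_zero[OF assms(1)]
    by (simp add: AE_measure_pmf_iff)
qed simp

theorem lemma10:
  shows "\<exists>c::real. c > 0 \<and>
    (\<forall>Algo :: dataset \<Rightarrow> policy.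
       \<exists>M mu K. wf_mdp M \<and> K \<ge> 1 \<and>
         \<not> opt_concentrable M mu \<and>
         (AE D in measure_pmf (dataset_dist M mu K). subopt M (Algo D) \<ge> c))"
proof (intro exI[of _ "1/2"] conjI allI)
  fix Algo :: "dataset \<Rightarrow> policy"
  let ?p = "Algo [[(0, 0, 0)]] 0 0"
  have "measure_pmf.prob ?p {1} + measure_pmf.prob ?p {2..} = measure_pmf.prob ?p ({1} \<union> {2..})"
    by (rule measure_pmf.finite_measure_Union[symmetric]) auto
  also have "\<dots> \<le> 1"
    by simp
  finally consider "measure_pmf.prob ?p {1} \<le> 1/2" | "measure_pmf.prob ?p {2..} \<le> 1/2"
    by linarith
  then show "\<exists>M mu K. wf_mdp M \<and> K \<ge> 1 \<and> \<not> opt_concentrable M mu \<and>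
               (AE D in measure_pmf (dataset_dist M mu K). subopt M (Algo D) \<ge> 1/2)"
    by cases (rule bandit_pull_zero_lower_bound; simp)+
qed simp

end
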